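(* Let $W$ be a (1-safe) DAW-net and $\mathrm{bc}(W)$ its $\mathcal{BC}$ encoding. For any $\ell\ge0$, if $\rho=(M_0,\eta_0)\xrightarrow{t_0}(M_1,\eta_1)\xrightarrow{t_1}\cdots\xrightarrow{t_{\ell-1}}(M_\ell,\eta_\ell)$ is a sequence of valid firings of $W$ of length $\ell$ with $(M_0,\eta_0)=(M_s,\eta_s)$ the initial state, then $\bigcup_{i=0}^{\ell}\Phi_i(\rho)$ is a stable model of $P_\ell(\mathrm{bc}(W))$.
   Context: **DAW-nets.** Data model $\mathcal{D}=(\mathcal{V},\Delta,\mathrm{dm},\mathrm{ord})$: variables, finite domains $\Delta_i$ assigned by total surjective $\mathrm{dm}$, partial orders $\le_{\Delta_i}$ on some domains. Assignments: partial $\eta$ with $\eta(v)\in\mathrm{dm}(v)$. Guards $\Phi::=\mathit{true}\mid\mathrm{def}(v)\mid t_1=t_2\mid t_1\le t_2\mid\neg\Phi\mid\Phi\wedge\Phi$ ($t_i$ variables or constants), with $t[\eta]=\eta(t)$ for variables on which $\eta$ is defined and $t$ otherwise: $\mathrm{def}(v)$ iff $\eta(v)$ defined; $t_1=t_2$ iff $t_1[\eta],t_2[\eta]$ are constants and equal; $t_1\le t_2$ iff both lie in some ordered $\Delta_i$ and $t_1[\eta]\le_{\Delta_i}t_2[\eta]$. A DAW-net $W=\langle\mathcal{D},(P,T,F),\mathrm{wr},\mathrm{gd}\rangle$ consists of a workflow Petri net with places $\mathit{start},\mathit{sink}$ (presets ${}^\bullet t$, postsets $t^\bullet$), partial functions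 $\mathrm{wr}(t)$ with $\mathrm{wr}(t)(v)\subseteq\mathrm{dm}(v)$, and guards $\mathrm{gd}(t)$. A firing $(M,\eta)\xrightarrow{t}(M',\eta')$ is valid iff $\{p\mid M(p)>0\}\supseteq{}^\bullet t$; $\mathcal{D},\eta\models\mathrm{gd}(t)$; $M'(p)=M(p)-1$ on ${}^\bullet t\setminus t^\bullet$, $M(p)+1$ on $t^\bullet\setminus{}^\bullet t$, else $M(p)$; $\mathrm{dom}(\eta')=\mathrm{dom}(\eta)\cup\{v\mid\mathrm{wr}(t)(v)\neq\emptyset\}\setminus\{v\mid\mathrm{wr}(t)(v)=\emptyset\}$, $\eta'(v)\in\mathrm{wr}(t)(v)$ for $v\in\mathrm{dom}(\mathrm{wr}(t))$, else $\eta'(v)=\eta(v)$. Initial state $(M_s,\eta_s)$: one token in $\mathit{start}$, none elsewhere, $\eta_s$ empty. $W$ is assumed 1-safe. $\mathcal{V}'$: finite set of variables of $W$; $\mathrm{adm}(v)=\bigcup_t\mathrm{wr}(t)(v)$. **$\mathcal{BC}$ semantics.** Fluents have finite domains; laws: dynamic "$A_0$ after $A'_1,\dots,A'_n$ ifcons $A_{n+1},\dots,A_m$" ($A_0$ an atom $f=v$ or false; $A'_j$ atoms or action constants), static "$A_0$ if ... ifcons ...", and "initially $f=v$". $P_\ell(B)$ is the disjunctive program with classical negation $\neg$ and default negation $\sim$ containing: each static law as $i{:}A_0\leftarrow i{:}A_1,\dots,i{:}A_n,\sim\neg(i{:}A_{n+1}),\dots,\sim\neg(i{:}A_m)$ for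 $0\le i\le\ell$; each dynamic law as $i{+}1{:}A_0\leftarrow i{:}A'_1,\dots,i{:}A'_n,\sim\neg(i{+}1{:}A_{n+1}),\dots,\sim\neg(i{+}1{:}A_m)$ for $0\le i<\ell$ (a constraint if $A_0$ is false); the fact $0{:}f=v$ for each "initially $f=v$"; $0{:}f=v\vee\neg(0{:}f=v)$ for all fluents and values; $i{:}a\vee\neg(i{:}a)$ for action constants and $i<\ell$; and for $i\le\ell$ and each fluent $f$ with domain $v_1,\dots,v_k$: $\leftarrow\sim(i{:}f=v_1),\dots,\sim(i{:}f=v_k)$ and $\neg(i{:}f=v)\leftarrow i{:}f=w$ for $v\neq w$. Stable models are answer sets. **The encoding $\mathrm{bc}(W)$.** Fluents $v\in\mathcal{V}'$ with domain $\mathrm{adm}(v)\cup\{\mathrm{null}\}$, Boolean fluents $p\in P$ and $\mathit{trans}$; action constants $t\in T$. Laws: "$v=o$ after $v=o$ ifcons $v=o$" ($o\in\mathrm{adm}(v)\cup\{\mathrm{null}\}$); "$p=o$ after $p=o$ ifcons $p=o$" ($o$ Boolean); for each $t$: "$p=\mathrm{false}$ after $t$" ($p\in{}^\bullet t\setminus t^\bullet$); "$p=\mathrm{true}$ after $t$" ($p\in t^\bullet\setminus{}^\bullet t$); "$v=d$ after $t$ ifcons $v=d$" ($d\in\mathrm{wr}(t)(v)$); "$v=\mathrm{null}$ after $t$" (if $\mathrm{wr}(t)(v)=\emptyset$); "false after $t$ ifcons $v=d$" (if $\mathrm{wr}(t)(v)\neq\emptyset$, $d\in\{\mathrm{null}\}\cup\mathrm{adm}(v)\setminus\mathrm{wr}(t)(v)$);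 "false after $t,s$" ($t\neq s$); "false after $t,p=\mathrm{false}$" ($p\in{}^\bullet t$); "$\mathit{trans}=\mathrm{true}$ after $t$"; "initially $\mathit{start}=\mathrm{true}$", "initially $p=\mathrm{false}$" ($p\neq\mathit{start}$), "initially $v=\mathrm{null}$", "initially $\mathit{trans}=\mathrm{true}$". For each $t$ with $\mathrm{gd}(t)\not\equiv\mathit{true}$, for a chosen formula $\bigvee_{k}t^k_1\wedge\dots\wedge t^k_{n_k}$ equivalent over $\mathcal{D}$ to $\neg\mathrm{gd}(t)$ whose terms are $v=o$ or $\neg\mathrm{def}(v)$, the laws "false after $t,[\![t^k_1]\!],\dots,[\![t^k_{n_k}]\!]$", where $[\![v=o]\!]=(v=o)$ and $[\![\neg\mathrm{def}(v)]\!]=(v=\mathrm{null})$. **The sets $\Phi_i(\rho)$.** For $0\le i\le\ell$, $\Phi_i(\rho)=\Phi^\nu_i(\rho)\cup\Phi^\tau_i(\rho)$ where $\Phi^\nu_i(\rho)=\{i{:}p=\mathrm{true},\neg(i{:}p=\mathrm{false})\mid M_i(p)>0\}\cup\{i{:}p=\mathrm{false},\neg(i{:}p=\mathrm{true})\mid M_i(p)=0\}\cup\{i{:}v=o,\neg(i{:}v=\mathrm{null})\mid v\in\mathcal{V}',\eta_i(v)=o\}\cup\{i{:}v=\mathrm{null}\mid\eta_i(v)\text{ undefined}\}\cup\{\neg(i{:}v=o)\mid v\in\mathcal{V}',o\in\mathrm{adm}(v),\eta_i(v)\neq o\text{ or undefined}\}\cup\{i{:}\mathit{trans}=\mathrm{true},\neg(i{:}\mathit{trans}=\mathrm{false})\}$,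 and $\Phi^\tau_i(\rho)=\emptyset$ for $i\ge\ell$, $\{i{:}t_i\}\cup\{\neg(i{:}t)\mid t\in T,t\neq t_i\}$ for $i<\ell$. *)

theory Defs
  imports Main
begin

record ('v, 'd) data_model =
  dvars :: "'v set"
  dm    :: "'v \<Rightarrow> 'd set"
  dord  :: "'d set \<Rightarrow> ('d \<times> 'd) set option" \<comment> \<open>partial order on some domains\<close>

definition domains :: "('v, 'd) data_model \<Rightarrow> 'd set set" where
  "domains D = dm D ` dvars D"

definition wf_data_model :: "('v, 'd) data_model \<Rightarrow> bool" where
  "wf_data_model D \<longleftrightarrow>
     (\<forall>v\<in>dvars D. finite (dm D v)) \<and>
     (\<forall>X R. dord D X = Some R \<longrightarrow> X \<in> domains D \<and> partial_order_on X R)"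

type_synonym ('v, 'd) assignment = "'v \<Rightarrow> 'd option"

definition is_assignment :: "('v, 'd) data_model \<Rightarrow> ('v, 'd) assignment \<Rightarrow> bool" where
  "is_assignment D \<eta> \<longleftrightarrow> dom \<eta> \<subseteq> dvars D \<and> (\<forall>v d. \<eta> v = Some d \<longrightarrow> d \<in> dm D v)"

datatype ('v, 'd) gterm = GVar 'v | GConst 'd

datatype ('v, 'd) guard =
    GTrue
  | GDef 'v
  | GEq "('v, 'd) gterm" "('v, 'd) gterm"
  | GLeq "('v, 'd) gterm" "('v, 'd) gterm"
  | GNot "('v, 'd) guard"
  | GAnd "('v, 'd) guard" "('v, 'd) guard"

fun tval :: "('v, 'd) assignment \<Rightarrow> ('v, 'd) gterm \<Rightarrow> 'd option" where
  "tval \<eta> (GVar v) = \<eta> v"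
| "tval \<eta> (GConst c) = Some c"

fun gsat :: "('v, 'd) data_model \<Rightarrow> ('v, 'd) assignment \<Rightarrow> ('v, 'd) guard \<Rightarrow> bool" where
  "gsat D \<eta> GTrue = True"
| "gsat D \<eta> (GDef v) = (\<eta> v \<noteq> None)"
| "gsat D \<eta> (GEq t1 t2) = (\<exists>c1 c2. tval \<eta> t1 = Some c1 \<and> tval \<eta> t2 = Some c2 \<and> c1 = c2)"
| "gsat D \<eta> (GLeq t1 t2) = (\<exists>c1 c2 X R. tval \<eta> t1 = Some c1 \<and> tval \<eta> t2 = Some c2 \<and>
       X \<in> domains D \<and> dord D X = Some R \<and> c1 \<in> X \<and> c2 \<in> X \<and> (c1, c2) \<in> R)"
| "gsat D \<eta> (GNot g) = (\<not> gsat D \<eta> g)"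
| "gsat D \<eta> (GAnd g1 g2) = (gsat D \<eta> g1 \<and> gsat D \<eta> g2)"

fun tvars :: "('v, 'd) gterm \<Rightarrow> 'v set" where
  "tvars (GVar v) = {v}"
| "tvars (GConst c) = {}"

fun gvars :: "('v, 'd) guard \<Rightarrow> 'v set" where
  "gvars GTrue = {}"
| "gvars (GDef v) = {v}"
| "gvars (GEq t1 t2) = tvars t1 \<union> tvars t2"
| "gvars (GLeq t1 t2) = tvars t1 \<union> tvars t2"
| "gvars (GNot g) = gvars g"
| "gvars (GAnd g1 g2) = gvars g1 \<union> gvars g2"

record ('v, 'd, 'p, 't) dawnet =
  dmodel :: "('v, 'd) data_model"
  places :: "'p set"
  trans  :: "'t set"
  flow_in  :: "('p \<times> 't) set"
  flow_out :: "('t \<times> 'p) set"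
  pstart :: 'p
  psink  :: 'p
  wr :: "'t \<Rightarrow> 'v \<Rightarrow> 'd set option"
  gd :: "'t \<Rightarrow> ('v, 'd) guard"

definition preset :: "('v, 'd, 'p, 't) dawnet \<Rightarrow> 't \<Rightarrow> 'p set" where
  "preset W t = {p. (p, t) \<in> flow_in W}"

definition postset :: "('v, 'd, 'p, 't) dawnet \<Rightarrow> 't \<Rightarrow> 'p set" where
  "postset W t = {p. (t, p) \<in> flow_out W}"

definition net_edges :: "('v, 'd, 'p, 't) dawnet \<Rightarrow> (('p + 't) \<times> ('p + 't)) set" where
  "net_edges W = {(Inl p, Inr t) | p t. (p, t) \<in> flow_in W} \<union> {(Inr t, Inl p) | t p. (t, p) \<in> flow_out W}"

definition wf_dawnet :: "('v, 'd, 'p, 't) dawnet \<Rightarrow> bool" where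
  "wf_dawnet W \<longleftrightarrow>
     wf_data_model (dmodel W) \<and>
     finite (places W) \<and> finite (trans W) \<and>
     flow_in W \<subseteq> places W \<times> trans W \<and> flow_out W \<subseteq> trans W \<times> places W \<and>
     pstart W \<in> places W \<and> psink W \<in> places W \<and>
     (\<forall>t. (t, pstart W) \<notin> flow_out W) \<and> (\<forall>t. (psink W, t) \<notin> flow_in W) \<and>
     (\<forall>n \<in> Inl ` places W \<union> Inr ` trans W.
        (Inl (pstart W), n) \<in> (net_edges W)\<^sup>* \<and> (n, Inl (psink W)) \<in> (net_edges W)\<^sup>*) \<and>
     (\<forall>t \<in> trans W. dom (wr W t) \<subseteq> dvars (dmodel W) \<and>
        (\<forall>v X. wr W t v = Some X \<longrightarrow> X \<subseteq> dm (dmodel W) v) \<and>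
        gvars (gd W t) \<subseteq> dvars (dmodel W))"

type_synonym ('v, 'd, 'p) state = "('p \<Rightarrow> nat) \<times> ('v, 'd) assignment"

definition fire :: "('v, 'd, 'p, 't) dawnet \<Rightarrow> ('v, 'd, 'p) state \<Rightarrow> 't \<Rightarrow> ('v, 'd, 'p) state \<Rightarrow> bool" where
  "fire W s t s' \<longleftrightarrow> (case (s, s') of ((M, \<eta>), (M', \<eta>')) \<Rightarrow>
     t \<in> trans W \<and>
     preset W t \<subseteq> {p. M p > 0} \<and>
     gsat (dmodel W) \<eta> (gd W t) \<and>
     (\<forall>p. M' p = (if p \<in> preset W t - postset W t then M p - 1
                  else if p \<in> postset W t - preset W t then M p + 1 else M p)) \<and>
     (\<forall>v. case wr W t v of
            None \<Rightarrow> \<eta>' v = \<eta> v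
          | Some X \<Rightarrow> (X = {} \<longrightarrow> \<eta>' v = None) \<and> (X \<noteq> {} \<longrightarrow> (\<exists>d\<in>X. \<eta>' v = Some d))))"

definition init_state :: "('v, 'd, 'p, 't) dawnet \<Rightarrow> ('v, 'd, 'p) state" where
  "init_state W = ((\<lambda>p. if p = pstart W then 1 else 0), Map.empty)"

definition reachable :: "('v, 'd, 'p, 't) dawnet \<Rightarrow> ('v, 'd, 'p) state set" where
  "reachable W = {s. (init_state W, s) \<in> {(s, s'). \<exists>t. fire W s t s'}\<^sup>*}"

definition one_safe :: "('v, 'd, 'p, 't) dawnet \<Rightarrow> bool" where
  "one_safe W \<longleftrightarrow> (\<forall>(M, \<eta>) \<in> reachable W. \<forall>p. M p \<le> 1)"

definition netvars :: "('v, 'd, 'p, 't) dawnet \<Rightarrow> 'v set" where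
  "netvars W = (\<Union>t\<in>trans W. dom (wr W t)) \<union> (\<Union>t\<in>trans W. gvars (gd W t))"

definition adm :: "('v, 'd, 'p, 't) dawnet \<Rightarrow> 'v \<Rightarrow> 'd set" where
  "adm W v = (\<Union>t\<in>trans W. case wr W t v of None \<Rightarrow> {} | Some X \<Rightarrow> X)"

definition is_run :: "('v, 'd, 'p, 't) dawnet \<Rightarrow> nat \<Rightarrow> (nat \<Rightarrow> 'p \<Rightarrow> nat) \<Rightarrow>
    (nat \<Rightarrow> ('v, 'd) assignment) \<Rightarrow> (nat \<Rightarrow> 't) \<Rightarrow> bool" where
  "is_run W l M \<eta> tr \<longleftrightarrow> (M 0, \<eta> 0) = init_state W \<and>
     (\<forall>i<l. fire W (M i, \<eta> i) (tr i) (M (Suc i), \<eta> (Suc i)))"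

section \<open>Action language BC and its translation to logic programs\<close>

datatype ('f, 'x, 'a) bcatom = FAt 'f 'x | Act 'a

datatype ('f, 'x, 'a) bclaw =
    \<comment> \<open>Static: A0 if A1..An ifcons An+1..Am; head None = false\<close>
    Static "('f \<times> 'x) option" "('f \<times> 'x) list" "('f \<times> 'x) list"
    \<comment> \<open>Dynamic: A0 after A1'..An' ifcons An+1..Am; head None = false\<close>
  | Dynamic "('f \<times> 'x) option" "('f, 'x, 'a) bcatom list" "('f \<times> 'x) list"
  | Initially 'f 'x

record ('f, 'x, 'a) action_desc =
  fluents :: "'f set"
  fdom    :: "'f \<Rightarrow> 'x set"
  actions :: "'a set"
  laws    :: "('f, 'x, 'a) bclaw set"

text \<open>Ground atoms i:A; literals with classical negation.\<close>
type_synonym ('f, 'x, 'a) gatom = "nat \<times> ('f, 'x, 'a) bcatom"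

datatype 'at lit = Pos 'at | Neg 'at

text \<open>Rule: disjunctive head, positive body, default-negated body (~L).\<close>
record 'l rule =
  rhead :: "'l set"
  rpos  :: "'l set"
  rneg  :: "'l set"

definition consistent :: "'at lit set \<Rightarrow> bool" where
  "consistent S \<longleftrightarrow> (\<forall>a. \<not> (Pos a \<in> S \<and> Neg a \<in> S))"

text \<open>Gelfond-Lifschitz answer sets of disjunctive programs with classical negation.\<close>
definition reduct :: "'at lit rule set \<Rightarrow> 'at lit set \<Rightarrow> 'at lit rule set" where
  "reduct \<Pi> S = {\<lparr>rhead = rhead r, rpos = rpos r, rneg = {}\<rparr> | r. r \<in> \<Pi> \<and> rneg r \<inter> S = {}}"

definition closed_under :: "'at lit rule set \<Rightarrow> 'at lit set \<Rightarrow> bool" where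
  "closed_under \<Pi> S \<longleftrightarrow> (\<forall>r\<in>\<Pi>. rpos r \<subseteq> S \<longrightarrow> rhead r \<inter> S \<noteq> {}) \<and> (consistent S \<or> S = UNIV)"

definition answer_set :: "'at lit rule set \<Rightarrow> 'at lit set \<Rightarrow> bool" where
  "answer_set \<Pi> S \<longleftrightarrow> closed_under (reduct \<Pi> S) S \<and>
     (\<forall>S'. S' \<subseteq> S \<and> closed_under (reduct \<Pi> S) S' \<longrightarrow> S' = S)"

definition fat :: "nat \<Rightarrow> ('f \<times> 'x) \<Rightarrow> ('f, 'x, 'a) gatom lit" where
  "fat i fx = Pos (i, FAt (fst fx) (snd fx))"

definition nfat :: "nat \<Rightarrow> ('f \<times> 'x) \<Rightarrow> ('f, 'x, 'a) gatom lit" where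
  "nfat i fx = Neg (i, FAt (fst fx) (snd fx))"

definition hd_lits :: "nat \<Rightarrow> ('f \<times> 'x) option \<Rightarrow> ('f, 'x, 'a) gatom lit set" where
  "hd_lits i h = (case h of None \<Rightarrow> {} | Some fx \<Rightarrow> {fat i fx})"

definition law_rules :: "nat \<Rightarrow> ('f, 'x, 'a) bclaw \<Rightarrow> ('f, 'x, 'a) gatom lit rule set" where
  "law_rules l law = (case law of
      Static h body ifc \<Rightarrow>
        {\<lparr>rhead = hd_lits i h, rpos = fat i ` set body, rneg = nfat i ` set ifc\<rparr> | i. i \<le> l}
    | Dynamic h aft ifc \<Rightarrow>
        {\<lparr>rhead = hd_lits (Suc i) h, rpos = (\<lambda>A. Pos (i, A)) ` set aft, rneg = nfat (Suc i) ` set ifc\<rparr> | i. i < l}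
    | Initially f x \<Rightarrow> {\<lparr>rhead = {fat 0 (f, x)}, rpos = {}, rneg = {}\<rparr>})"

definition prog :: "nat \<Rightarrow> ('f, 'x, 'a) action_desc \<Rightarrow> ('f, 'x, 'a) gatom lit rule set" where
  "prog l B =
     (\<Union>law\<in>laws B. law_rules l law) \<union>
     {\<lparr>rhead = {fat 0 (f, x), nfat 0 (f, x)}, rpos = {}, rneg = {}\<rparr> | f x. f \<in> fluents B \<and> x \<in> fdom B f} \<union>
     {\<lparr>rhead = {Pos (i, Act a), Neg (i, Act a)}, rpos = {}, rneg = {}\<rparr> | i a. a \<in> actions B \<and> i < l} \<union>
     {\<lparr>rhead = {}, rpos = {}, rneg = (\<lambda>x. fat i (f, x)) ` fdom B f\<rparr> | i f. f \<in> fluents B \<and> i \<le> l} \<union>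
     {\<lparr>rhead = {nfat i (f, x)}, rpos = {fat i (f, y)}, rneg = {}\<rparr> | i f x y.
         f \<in> fluents B \<and> x \<in> fdom B f \<and> y \<in> fdom B f \<and> x \<noteq> y \<and> i \<le> l}"

datatype ('v, 'p) fluent = FVar 'v | FPlace 'p | FTrans

datatype 'd fval = Val 'd | Null | BV bool

text \<open>Terms of the chosen DNF of the negated guard: v = o or \<not>def(v).\<close>
datatype ('v, 'd) dnf_term = DEq 'v 'd | DUndef 'v

fun dnf_term_sat :: "('v, 'd) assignment \<Rightarrow> ('v, 'd) dnf_term \<Rightarrow> bool" where
  "dnf_term_sat \<eta> (DEq v c) = (\<eta> v = Some c)"
| "dnf_term_sat \<eta> (DUndef v) = (\<eta> v = None)"

definition dnf_sat :: "('v, 'd) assignment \<Rightarrow> ('v, 'd) dnf_term list list \<Rightarrow> bool" where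
  "dnf_sat \<eta> \<phi> \<longleftrightarrow> (\<exists>c\<in>set \<phi>. \<forall>a\<in>set c. dnf_term_sat \<eta> a)"

definition valid_neg_guard_dnf :: "('v, 'd, 'p, 't) dawnet \<Rightarrow> 't \<Rightarrow> ('v, 'd) dnf_term list list \<Rightarrow> bool" where
  "valid_neg_guard_dnf W t \<phi> \<longleftrightarrow>
     (\<forall>\<eta>. is_assignment (dmodel W) \<eta> \<longrightarrow> (dnf_sat \<eta> \<phi> \<longleftrightarrow> \<not> gsat (dmodel W) \<eta> (gd W t)))"

definition guard_trivial :: "('v, 'd, 'p, 't) dawnet \<Rightarrow> 't \<Rightarrow> bool" where
  "guard_trivial W t \<longleftrightarrow> (\<forall>\<eta>. is_assignment (dmodel W) \<eta> \<longrightarrow> gsat (dmodel W) \<eta> (gd W t))"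

fun tr_dnf_term :: "('v, 'd) dnf_term \<Rightarrow> (('v, 'p) fluent, 'd fval, 't) bcatom" where
  "tr_dnf_term (DEq v c) = FAt (FVar v) (Val c)"
| "tr_dnf_term (DUndef v) = FAt (FVar v) Null"

definition bc_fdom :: "('v, 'd, 'p, 't) dawnet \<Rightarrow> ('v, 'p) fluent \<Rightarrow> 'd fval set" where
  "bc_fdom W f = (case f of FVar v \<Rightarrow> Val ` adm W v \<union> {Null} | FPlace p \<Rightarrow> {BV True, BV False}
                  | FTrans \<Rightarrow> {BV True, BV False})"

definition bc_laws :: "('v, 'd, 'p, 't) dawnet \<Rightarrow> ('t \<Rightarrow> ('v, 'd) dnf_term list list) \<Rightarrow>
    (('v, 'p) fluent, 'd fval, 't) bclaw set" where
  "bc_laws W \<phi> =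
     {Dynamic (Some (FVar v, x)) [FAt (FVar v) x] [(FVar v, x)] | v x. v \<in> netvars W \<and> x \<in> bc_fdom W (FVar v)} \<union>
     {Dynamic (Some (FPlace p, BV b)) [FAt (FPlace p) (BV b)] [(FPlace p, BV b)] | p b. p \<in> places W} \<union>
     {Dynamic (Some (FPlace p, BV False)) [Act t] [] | t p. t \<in> trans W \<and> p \<in> preset W t - postset W t} \<union>
     {Dynamic (Some (FPlace p, BV True)) [Act t] [] | t p. t \<in> trans W \<and> p \<in> postset W t - preset W t} \<union>
     {Dynamic (Some (FVar v, Val d)) [Act t] [(FVar v, Val d)] | t v d X.
         t \<in> trans W \<and> wr W t v = Some X \<and> d \<in> X} \<union>
     {Dynamic (Some (FVar v, Null)) [Act t] [] | t v. t \<in> trans W \<and> wr W t v = Some {}} \<union>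
     {Dynamic None [Act t] [(FVar v, x)] | t v X x. t \<in> trans W \<and> wr W t v = Some X \<and> X \<noteq> {} \<and>
         x \<in> {Null} \<union> Val ` (adm W v - X)} \<union>
     {Dynamic None [Act t, Act s] [] | t s. t \<in> trans W \<and> s \<in> trans W \<and> t \<noteq> s} \<union>
     {Dynamic None [Act t, FAt (FPlace p) (BV False)] [] | t p. t \<in> trans W \<and> p \<in> preset W t} \<union>
     {Dynamic (Some (FTrans, BV True)) [Act t] [] | t. t \<in> trans W} \<union>
     {Initially (FPlace (pstart W)) (BV True)} \<union>
     {Initially (FPlace p) (BV False) | p. p \<in> places W \<and> p \<noteq> pstart W} \<union>
     {Initially (FVar v) Null | v. v \<in> netvars W} \<union>
     {Initially FTrans (BV True)} \<union>
     {Dynamic None (Act t # map tr_dnf_term c) [] | t c. t \<in> trans W \<and> \<not> guard_trivial W t \<and> c \<in> set (\<phi> t)}"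

definition bc :: "('v, 'd, 'p, 't) dawnet \<Rightarrow> ('t \<Rightarrow> ('v, 'd) dnf_term list list) \<Rightarrow>
    (('v, 'p) fluent, 'd fval, 't) action_desc" where
  "bc W \<phi> = \<lparr>fluents = FVar ` netvars W \<union> FPlace ` places W \<union> {FTrans},
             fdom = bc_fdom W, actions = trans W, laws = bc_laws W \<phi>\<rparr>"

definition Phi_nu :: "('v, 'd, 'p, 't) dawnet \<Rightarrow> nat \<Rightarrow> ('p \<Rightarrow> nat) \<Rightarrow> ('v, 'd) assignment \<Rightarrow>
    (('v, 'p) fluent, 'd fval, 't) gatom lit set" where
  "Phi_nu W i M \<eta> =
     {l. \<exists>p\<in>places W. M p > 0 \<and> (l = fat i (FPlace p, BV True) \<or> l = nfat i (FPlace p, BV False))} \<union>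
     {l. \<exists>p\<in>places W. M p = 0 \<and> (l = fat i (FPlace p, BV False) \<or> l = nfat i (FPlace p, BV True))} \<union>
     {l. \<exists>v\<in>netvars W. \<exists>c. \<eta> v = Some c \<and> (l = fat i (FVar v, Val c) \<or> l = nfat i (FVar v, Null))} \<union>
     {fat i (FVar v, Null) | v. v \<in> netvars W \<and> \<eta> v = None} \<union>
     {nfat i (FVar v, Val c) | v c. v \<in> netvars W \<and> c \<in> adm W v \<and> \<eta> v \<noteq> Some c} \<union>
     {fat i (FTrans, BV True), nfat i (FTrans, BV False)}"

definition Phi_tau :: "('v, 'd, 'p, 't) dawnet \<Rightarrow> nat \<Rightarrow> nat \<Rightarrow> 't \<Rightarrow>
    (('v, 'p) fluent, 'd fval, 't) gatom lit set" where
  "Phi_tau W l i t = (if l \<le> i then {} else {Pos (i, Act t)} \<union> {Neg (i, Act s) | s. s \<in> trans W \<and> s \<noteq> t})"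

definition Phi :: "('v, 'd, 'p, 't) dawnet \<Rightarrow> nat \<Rightarrow> (nat \<Rightarrow> 'p \<Rightarrow> nat) \<Rightarrow>
    (nat \<Rightarrow> ('v, 'd) assignment) \<Rightarrow> (nat \<Rightarrow> 't) \<Rightarrow> nat \<Rightarrow> (('v, 'p) fluent, 'd fval, 't) gatom lit set" where
  "Phi W l M \<eta> tr i = Phi_nu W i (M i) (\<eta> i) \<union> Phi_tau W l i (tr i)"

end

theory Submission
  imports Defs
begin

text \<open>
  Write S for the union of the sets Phi_i(rho). Each literal of S records the actual value of a
  fluent at time i or which transitions fire at time i, so S is consistent, and the firing rule
  makes S satisfy every rule of P_l(bc(W)) whose default-negated body avoids S: the effect and
  inertia laws describe exactly how a firing changes marking and assignment (1-safety makes a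
  consumed place empty), and the executability constraints hold because the fired transition was
  enabled and its guard, hence not the chosen DNF of its negation, was true.
  For minimality, a subset S' of S closed under the reduct must contain the fired actions (by the
  choice rules, since the other disjunct is not in S), hence by induction on time the actual fluent
  values (initial laws, then effect or inertia laws whose ifcons literals are consistent with S),
  and finally all negative literals of S, through the choice rules of the other actions and the
  rules excluding a second value of a fluent.
\<close>

section \<open>Answer sets and the rules of a BC program\<close>

lemma closed_under_reduct_iff:
  "closed_under (reduct \<Pi> S) S' \<longleftrightarrow>
     (\<forall>r\<in>\<Pi>. rneg r \<inter> S = {} \<longrightarrow> rpos r \<subseteq> S' \<longrightarrow> rhead r \<inter> S' \<noteq> {}) \<and> (consistent S' \<or> S' = UNIV)"
  unfolding closed_under_def reduct_def by fastforce

lemma answer_setI: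
  assumes "consistent S"
    and "\<And>r. r \<in> \<Pi> \<Longrightarrow> rneg r \<inter> S = {} \<Longrightarrow> rpos r \<subseteq> S \<Longrightarrow> rhead r \<inter> S \<noteq> {}"
    and "\<And>S'. S' \<subseteq> S \<Longrightarrow> closed_under (reduct \<Pi> S) S' \<Longrightarrow> S \<subseteq> S'"
  shows "answer_set \<Pi> S"
proof -
  have "closed_under (reduct \<Pi> S) S"
    unfolding closed_under_reduct_iff using assms(1,2) by simp
  then show ?thesis
    unfolding answer_set_def using assms(3) by auto
qed

lemma closed_under_reduct_derives:
  assumes "closed_under (reduct \<Pi> S) S'" "r \<in> \<Pi>" "rneg r \<inter> S = {}" "rpos r \<subseteq> S'" "rhead r = {a}"
  shows "a \<in> S'"
proof -
  have "rhead r \<inter> S' \<noteq> {}"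
    using assms(1-4) unfolding closed_under_reduct_iff by simp
  then show ?thesis using assms(5) by simp
qed

lemma closed_under_reduct_choice:
  assumes "closed_under (reduct \<Pi> S) S'" "\<lparr>rhead = {a, b}, rpos = {}, rneg = {}\<rparr> \<in> \<Pi>" "b \<notin> S'"
  shows "a \<in> S'"
  using assms unfolding closed_under_reduct_iff by fastforce

definition law_sat :: "nat \<Rightarrow> ('f, 'x, 'a) gatom lit set \<Rightarrow> ('f, 'x, 'a) bclaw \<Rightarrow> bool" where
  "law_sat l S law \<longleftrightarrow> (\<forall>r\<in>law_rules l law. rneg r \<inter> S = {} \<longrightarrow> rpos r \<subseteq> S \<longrightarrow> rhead r \<inter> S \<noteq> {})"

lemma law_sat_Dynamic_iff:
  "law_sat l S (Dynamic h aft ifc) \<longleftrightarrow>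
     (\<forall>i<l. (\<forall>A\<in>set aft. Pos (i, A) \<in> S) \<longrightarrow> (\<forall>fx\<in>set ifc. nfat (Suc i) fx \<notin> S) \<longrightarrow>
        hd_lits (Suc i) h \<inter> S \<noteq> {})"
proof -
  have "law_rules l (Dynamic h aft ifc) = (\<lambda>i. \<lparr>rhead = hd_lits (Suc i) h,
      rpos = (\<lambda>A. Pos (i, A)) ` set aft, rneg = nfat (Suc i) ` set ifc\<rparr>) ` {..<l}"
    by (auto simp: law_rules_def)
  then show ?thesis
    unfolding law_sat_def by (auto simp: image_subset_iff disjoint_iff)
qed

lemma law_sat_Initially_iff: "law_sat l S (Initially f x) \<longleftrightarrow> fat 0 (f, x) \<in> S"
  by (simp add: law_sat_def law_rules_def)

lemma law_rules_subset_prog: "law \<in> laws B \<Longrightarrow> law_rules l law \<subseteq> prog l B"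
  by (auto simp: prog_def)

lemma action_choice_in_prog:
  "a \<in> actions B \<Longrightarrow> i < l \<Longrightarrow> \<lparr>rhead = {Pos (i, Act a), Neg (i, Act a)}, rpos = {}, rneg = {}\<rparr> \<in> prog l B"
  unfolding prog_def by blast

lemma unique_value_rule_in_prog:
  "f \<in> fluents B \<Longrightarrow> x \<in> fdom B f \<Longrightarrow> y \<in> fdom B f \<Longrightarrow> x \<noteq> y \<Longrightarrow> i \<le> l \<Longrightarrow>
     \<lparr>rhead = {nfat i (f, x)}, rpos = {fat i (f, y)}, rneg = {}\<rparr> \<in> prog l B"
  unfolding prog_def by blast

lemma Dynamic_rule_in_law_rules:
  "i < l \<Longrightarrow> \<lparr>rhead = hd_lits (Suc i) h, rpos = (\<lambda>A. Pos (i, A)) ` set aft, rneg = nfat (Suc i) ` set ifc\<rparr>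
     \<in> law_rules l (Dynamic h aft ifc)"
  by (auto simp: law_rules_def)

lemma bc_simps [simp]:
  "FVar v \<in> fluents (bc W \<phi>) \<longleftrightarrow> v \<in> netvars W" "FPlace p \<in> fluents (bc W \<phi>) \<longleftrightarrow> p \<in> places W"
  "FTrans \<in> fluents (bc W \<phi>)"
  "fdom (bc W \<phi>) = bc_fdom W" "actions (bc W \<phi>) = trans W" "laws (bc W \<phi>) = bc_laws W \<phi>"
  by (auto simp: bc_def)

section \<open>Firing and reachability\<close>

lemma fire_in_trans: "fire W (M, \<eta>) t (M', \<eta>') \<Longrightarrow> t \<in> trans W"
  by (simp add: fire_def)

lemma fire_preset_marked: "fire W (M, \<eta>) t (M', \<eta>') \<Longrightarrow> p \<in> preset W t \<Longrightarrow> 0 < M p"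
  by (auto simp: fire_def)

lemma fire_guard: "fire W (M, \<eta>) t (M', \<eta>') \<Longrightarrow> gsat (dmodel W) \<eta> (gd W t)"
  by (simp add: fire_def)

lemma fire_consumes:
  "fire W (M, \<eta>) t (M', \<eta>') \<Longrightarrow> M p \<le> 1 \<Longrightarrow> p \<in> preset W t - postset W t \<Longrightarrow> M' p = 0"
  by (auto simp: fire_def)

lemma fire_produces: "fire W (M, \<eta>) t (M', \<eta>') \<Longrightarrow> p \<in> postset W t - preset W t \<Longrightarrow> 0 < M' p"
  by (simp add: fire_def)

lemma fire_marking_frame:
  "fire W (M, \<eta>) t (M', \<eta>') \<Longrightarrow> p \<notin> preset W t - postset W t \<Longrightarrow> p \<notin> postset W t - preset W t \<Longrightarrow>
     M' p = M p"
  by (auto simp: fire_def)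

lemma fire_assignment:
  "fire W (M, \<eta>) t (M', \<eta>') \<Longrightarrow> (case wr W t v of None \<Rightarrow> \<eta>' v = \<eta> v
     | Some X \<Rightarrow> (X = {} \<longrightarrow> \<eta>' v = None) \<and> (X \<noteq> {} \<longrightarrow> (\<exists>d\<in>X. \<eta>' v = Some d)))"
  by (simp add: fire_def)

lemma fire_unwritten: "fire W (M, \<eta>) t (M', \<eta>') \<Longrightarrow> wr W t v = None \<Longrightarrow> \<eta>' v = \<eta> v"
  using fire_assignment[of W M \<eta> t M' \<eta>' v] by simp

lemma fire_cleared: "fire W (M, \<eta>) t (M', \<eta>') \<Longrightarrow> wr W t v = Some {} \<Longrightarrow> \<eta>' v = None"
  using fire_assignment[of W M \<eta> t M' \<eta>' v] by simp

lemma fire_written: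
  "fire W (M, \<eta>) t (M', \<eta>') \<Longrightarrow> wr W t v = Some X \<Longrightarrow> X \<noteq> {} \<Longrightarrow> \<exists>d\<in>X. \<eta>' v = Some d"
  using fire_assignment[of W M \<eta> t M' \<eta>' v] by simp

lemma fire_assigned:
  "fire W (M, \<eta>) t (M', \<eta>') \<Longrightarrow> \<eta>' v = Some c \<Longrightarrow> \<eta> v = Some c \<or> (\<exists>X. wr W t v = Some X \<and> c \<in> X)"
  using fire_assignment[of W M \<eta> t M' \<eta>' v] by (auto split: option.splits)

lemma wr_netvars: "t \<in> trans W \<Longrightarrow> wr W t v = Some X \<Longrightarrow> v \<in> netvars W"
  by (auto simp: netvars_def)

lemma wr_adm: "t \<in> trans W \<Longrightarrow> wr W t v = Some X \<Longrightarrow> X \<subseteq> adm W v"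
  by (auto simp: adm_def intro!: bexI[of _ t])

lemma wf_dawnet_wr:
  "wf_dawnet W \<Longrightarrow> t \<in> trans W \<Longrightarrow> wr W t v = Some X \<Longrightarrow> v \<in> dvars (dmodel W) \<and> X \<subseteq> dm (dmodel W) v"
  unfolding wf_dawnet_def by blast

lemma reachable_assigned:
  assumes "wf_dawnet W" "(M, \<eta>) \<in> reachable W" "\<eta> v = Some c"
  shows "v \<in> netvars W \<and> c \<in> adm W v \<and> v \<in> dvars (dmodel W) \<and> c \<in> dm (dmodel W) v"
proof -
  have "((fst (init_state W), snd (init_state W)), (M, \<eta>)) \<in> {(s, s'). \<exists>t. fire W s t s'}\<^sup>*"
    using assms(2) by (simp add: reachable_def)
  then show ?thesis using assms(3)
  proof (induction arbitrary: c rule: rtrancl_induct2)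
    case refl
    then show ?case by (simp add: init_state_def)
  next
    case (step M \<eta> M' \<eta>')
    from step.hyps(2) obtain t where t: "fire W (M, \<eta>) t (M', \<eta>')" by blast
    from fire_assigned[OF t step.prems] show ?case
    proof
      assume "\<eta> v = Some c"
      then show ?thesis by (rule step.IH)
    next
      assume "\<exists>X. wr W t v = Some X \<and> c \<in> X"
      then obtain X where "wr W t v = Some X" "c \<in> X" by blast
      moreover have "t \<in> trans W" using fire_in_trans[OF t] .
      ultimately show ?thesis
        using wf_dawnet_wr[OF assms(1)] wr_netvars[of t W v X] wr_adm[of t W v X] by auto
    qed
  qed
qed

lemma reachable_is_assignment:
  "wf_dawnet W \<Longrightarrow> (M, \<eta>) \<in> reachable W \<Longrightarrow> is_assignment (dmodel W) \<eta>"
  unfolding is_assignment_def by (auto dest: reachable_assigned)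

lemma preset_places: "wf_dawnet W \<Longrightarrow> p \<in> preset W t \<Longrightarrow> p \<in> places W"
  unfolding wf_dawnet_def preset_def by auto

lemma postset_places: "wf_dawnet W \<Longrightarrow> p \<in> postset W t \<Longrightarrow> p \<in> places W"
  unfolding wf_dawnet_def postset_def by auto

lemma pstart_places: "wf_dawnet W \<Longrightarrow> pstart W \<in> places W"
  unfolding wf_dawnet_def by blast

lemma is_run_fire: "is_run W l M \<eta> tr \<Longrightarrow> i < l \<Longrightarrow> fire W (M i, \<eta> i) (tr i) (M (Suc i), \<eta> (Suc i))"
  by (simp add: is_run_def)

lemma is_run_init:
  "is_run W l M \<eta> tr \<Longrightarrow> M 0 = (\<lambda>p. if p = pstart W then 1 else 0) \<and> \<eta> 0 = Map.empty"
  by (simp add: is_run_def init_state_def)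

lemma is_run_reachable: "is_run W l M \<eta> tr \<Longrightarrow> i \<le> l \<Longrightarrow> (M i, \<eta> i) \<in> reachable W"
proof (induction i)
  case 0
  then show ?case by (simp add: reachable_def is_run_def)
next
  case (Suc i)
  then show ?case
    using is_run_fire[OF Suc.prems(1), of i] unfolding reachable_def by (auto intro: rtrancl_into_rtrancl)
qed

section \<open>The literals of a run\<close>

fun fluent_val :: "('p \<Rightarrow> nat) \<Rightarrow> ('v, 'd) assignment \<Rightarrow> ('v, 'p) fluent \<Rightarrow> 'd fval" where
  "fluent_val M \<eta> (FVar v) = (case \<eta> v of None \<Rightarrow> Null | Some c \<Rightarrow> Val c)"
| "fluent_val M \<eta> (FPlace p) = BV (0 < M p)"
| "fluent_val M \<eta> FTrans = BV True"

locale dawnet_run =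
  fixes W :: "('v, 'd, 'p, 't) dawnet"
    and \<phi> :: "'t \<Rightarrow> ('v, 'd) dnf_term list list"
    and l :: nat
    and M :: "nat \<Rightarrow> 'p \<Rightarrow> nat"
    and \<eta> :: "nat \<Rightarrow> ('v, 'd) assignment"
    and tr :: "nat \<Rightarrow> 't"
  assumes wf: "wf_dawnet W"
    and safe: "one_safe W"
    and guard_dnf: "\<forall>t\<in>trans W. \<not> guard_trivial W t \<longrightarrow> valid_neg_guard_dnf W t (\<phi> t)"
    and run: "is_run W l M \<eta> tr"
begin

abbreviation val :: "nat \<Rightarrow> ('v, 'p) fluent \<Rightarrow> 'd fval" where
  "val i \<equiv> fluent_val (M i) (\<eta> i)"

definition S :: "(('v, 'p) fluent, 'd fval, 't) gatom lit set" where
  "S = (\<Union>i\<in>{0..l}. Phi W l M \<eta> tr i)"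

lemma Pos_fluent_in_S: "Pos (i, FAt f x) \<in> S \<longleftrightarrow> i \<le> l \<and> f \<in> fluents (bc W \<phi>) \<and> x = val i f"
  by (cases f) (auto simp: S_def Phi_def Phi_nu_def Phi_tau_def fat_def nfat_def split: option.splits)

lemma Neg_fluent_in_S:
  "Neg (i, FAt f x) \<in> S \<longleftrightarrow> i \<le> l \<and> f \<in> fluents (bc W \<phi>) \<and> x \<in> bc_fdom W f \<and> x \<noteq> val i f"
  by (cases f)
    (auto simp: S_def Phi_def Phi_nu_def Phi_tau_def fat_def nfat_def bc_fdom_def split: option.splits)

lemma Pos_action_in_S: "Pos (i, Act a) \<in> S \<longleftrightarrow> i < l \<and> a = tr i"
  by (auto simp: S_def Phi_def Phi_nu_def Phi_tau_def fat_def nfat_def)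

lemma Neg_action_in_S: "Neg (i, Act a) \<in> S \<longleftrightarrow> i < l \<and> a \<in> trans W \<and> a \<noteq> tr i"
  by (auto simp: S_def Phi_def Phi_nu_def Phi_tau_def fat_def nfat_def)

lemma nfat_val_notin_S: "nfat i (f, val i f) \<notin> S"
  by (simp add: nfat_def Neg_fluent_in_S)

lemma S_consistent: "consistent S"
  unfolding consistent_def
proof
  fix a :: "(('v, 'p) fluent, 'd fval, 't) gatom"
  obtain i A where a: "a = (i, A)" by fastforce
  show "\<not> (Pos a \<in> S \<and> Neg a \<in> S)"
    unfolding a by (cases A) (auto simp: Pos_fluent_in_S Neg_fluent_in_S Pos_action_in_S Neg_action_in_S)
qed

lemma run_fire: "i < l \<Longrightarrow> fire W (M i, \<eta> i) (tr i) (M (Suc i), \<eta> (Suc i))"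
  using is_run_fire[OF run] .

lemma run_trans: "i < l \<Longrightarrow> tr i \<in> trans W"
  using fire_in_trans[OF run_fire] .

lemma marking_le_1: "i \<le> l \<Longrightarrow> M i p \<le> 1"
  using is_run_reachable[OF run] safe unfolding one_safe_def by fastforce

lemma val_in_fdom:
  assumes "i \<le> l" "f \<in> fluents (bc W \<phi>)"
  shows "val i f \<in> bc_fdom W f"
proof -
  have "c \<in> adm W v" if "\<eta> i v = Some c" for v c
    using reachable_assigned[OF wf is_run_reachable[OF run assms(1)] that] by blast
  then show ?thesis using assms(2) by (cases f) (auto simp: bc_fdom_def split: option.split)
qed

lemma action_law_satI:
  assumes "\<And>i. i < l \<Longrightarrow> t = tr i \<Longrightarrow> \<forall>A\<in>set aft. Pos (i, A) \<in> S \<Longrightarrow>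
      \<forall>fx\<in>set ifc. nfat (Suc i) fx \<notin> S \<Longrightarrow> hd_lits (Suc i) h \<inter> S \<noteq> {}"
  shows "law_sat l S (Dynamic h (Act t # aft) ifc)"
  using assms by (simp add: law_sat_Dynamic_iff Pos_action_in_S)

lemma inertia_law_sat:
  assumes "x \<in> bc_fdom W f"
  shows "law_sat l S (Dynamic (Some (f, x)) [FAt f x] [(f, x)])"
  unfolding law_sat_Dynamic_iff
proof (intro allI impI)
  fix i
  assume "i < l" "\<forall>A\<in>set [FAt f x]. Pos (i, A) \<in> S" "\<forall>fx\<in>set [(f, x)]. nfat (Suc i) fx \<notin> S"
  then have "f \<in> fluents (bc W \<phi>)" "x = val (Suc i) f"
    using assms by (simp_all add: Pos_fluent_in_S Neg_fluent_in_S nfat_def)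
  then show "hd_lits (Suc i) (Some (f, x)) \<inter> S \<noteq> {}"
    using \<open>i < l\<close> by (simp add: hd_lits_def fat_def Pos_fluent_in_S)
qed

lemma consume_law_sat:
  assumes "p \<in> preset W t - postset W t"
  shows "law_sat l S (Dynamic (Some (FPlace p, BV False)) [Act t] [])"
proof (rule action_law_satI)
  fix i
  assume "i < l" "t = tr i"
  then have "M (Suc i) p = 0"
    using fire_consumes[OF run_fire marking_le_1] assms by simp
  moreover have "p \<in> places W" using preset_places[OF wf] assms by blast
  ultimately show "hd_lits (Suc i) (Some (FPlace p, BV False)) \<inter> S \<noteq> {}"
    using \<open>i < l\<close> by (simp add: hd_lits_def fat_def Pos_fluent_in_S)
qed

lemma produce_law_sat:
  assumes "p \<in> postset W t - preset W t"
  shows "law_sat l S (Dynamic (Some (FPlace p, BV True)) [Act t] [])"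
proof (rule action_law_satI)
  fix i
  assume "i < l" "t = tr i"
  then have "0 < M (Suc i) p"
    using fire_produces[OF run_fire] assms by simp
  moreover have "p \<in> places W" using postset_places[OF wf] assms by blast
  ultimately show "hd_lits (Suc i) (Some (FPlace p, BV True)) \<inter> S \<noteq> {}"
    using \<open>i < l\<close> by (simp add: hd_lits_def fat_def Pos_fluent_in_S)
qed

lemma write_law_sat:
  assumes "t \<in> trans W" "wr W t v = Some X" "d \<in> X"
  shows "law_sat l S (Dynamic (Some (FVar v, Val d)) [Act t] [(FVar v, Val d)])"
proof (rule action_law_satI)
  fix i
  assume "i < l" "\<forall>fx\<in>set [(FVar v, Val d)]. nfat (Suc i) fx \<notin> S"
  moreover have "v \<in> netvars W" "d \<in> adm W v"
    using wr_netvars[OF assms(1,2)] wr_adm[OF assms(1,2)] assms(3) by blast+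
  ultimately have "val (Suc i) (FVar v) = Val d"
    by (simp add: nfat_def Neg_fluent_in_S bc_fdom_def)
  then show "hd_lits (Suc i) (Some (FVar v, Val d)) \<inter> S \<noteq> {}"
    using \<open>i < l\<close> \<open>v \<in> netvars W\<close> by (simp add: hd_lits_def fat_def Pos_fluent_in_S)
qed

lemma clear_law_sat:
  assumes "t \<in> trans W" "wr W t v = Some {}"
  shows "law_sat l S (Dynamic (Some (FVar v, Null)) [Act t] [])"
proof (rule action_law_satI)
  fix i
  assume "i < l" "t = tr i"
  then have "\<eta> (Suc i) v = None"
    using fire_cleared[OF run_fire] assms(2) by simp
  then show "hd_lits (Suc i) (Some (FVar v, Null)) \<inter> S \<noteq> {}"
    using \<open>i < l\<close> wr_netvars[OF assms] by (simp add: hd_lits_def fat_def Pos_fluent_in_S)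
qed

lemma write_range_law_sat:
  assumes "t \<in> trans W" "wr W t v = Some X" "X \<noteq> {}" "x \<in> {Null} \<union> Val ` (adm W v - X)"
  shows "law_sat l S (Dynamic None [Act t] [(FVar v, x)])"
  unfolding law_sat_Dynamic_iff
proof (intro allI impI)
  fix i
  assume "i < l" "\<forall>A\<in>set [Act t]. Pos (i, A) \<in> S"
  then have "t = tr i" by (simp add: Pos_action_in_S)
  then obtain d where "d \<in> X" "\<eta> (Suc i) v = Some d"
    using fire_written[OF run_fire[OF \<open>i < l\<close>]] assms(2,3) by blast
  then have "nfat (Suc i) (FVar v, x) \<in> S"
    using \<open>i < l\<close> assms(4) wr_netvars[OF assms(1,2)] by (auto simp: nfat_def Neg_fluent_in_S bc_fdom_def)
  then show "\<forall>fx\<in>set [(FVar v, x)]. nfat (Suc i) fx \<notin> S \<Longrightarrow> hd_lits (Suc i) None \<inter> S \<noteq> {}"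
    by simp
qed

lemma concurrency_law_sat: "t \<noteq> s \<Longrightarrow> law_sat l S (Dynamic None [Act t, Act s] [])"
  by (auto simp: law_sat_Dynamic_iff Pos_action_in_S)

lemma preset_law_sat: "p \<in> preset W t \<Longrightarrow> law_sat l S (Dynamic None [Act t, FAt (FPlace p) (BV False)] [])"
  unfolding law_sat_Dynamic_iff
proof (intro allI impI notI)
  fix i
  assume "p \<in> preset W t" "i < l" "\<forall>A\<in>set [Act t, FAt (FPlace p) (BV False)]. Pos (i, A) \<in> S"
  then have "t = tr i" "M i p = 0" by (auto simp: Pos_action_in_S Pos_fluent_in_S)
  then show False
    using fire_preset_marked[OF run_fire[OF \<open>i < l\<close>], of p] \<open>p \<in> preset W t\<close> by simp
qed

lemma trans_law_sat: "law_sat l S (Dynamic (Some (FTrans, BV True)) [Act t] [])"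
  by (simp add: law_sat_Dynamic_iff hd_lits_def fat_def Pos_fluent_in_S)

lemma initially_law_sat: "f \<in> fluents (bc W \<phi>) \<Longrightarrow> x = val 0 f \<Longrightarrow> law_sat l S (Initially f x)"
  by (simp add: law_sat_Initially_iff fat_def Pos_fluent_in_S)

lemma tr_dnf_term_in_S: "Pos (i, tr_dnf_term a) \<in> S \<Longrightarrow> dnf_term_sat (\<eta> i) a"
  by (cases a) (auto simp: Pos_fluent_in_S split: option.splits)

lemma guard_law_sat:
  assumes "t \<in> trans W" "\<not> guard_trivial W t" "c \<in> set (\<phi> t)"
  shows "law_sat l S (Dynamic None (Act t # map tr_dnf_term c) [])"
  unfolding law_sat_Dynamic_iff
proof (intro allI impI notI)
  fix i
  assume i: "i < l" and body: "\<forall>A\<in>set (Act t # map tr_dnf_term c). Pos (i, A) \<in> S"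
  then have "t = tr i" by (simp add: Pos_action_in_S)
  have "dnf_sat (\<eta> i) (\<phi> t)"
    unfolding dnf_sat_def using assms(3) body tr_dnf_term_in_S by auto
  moreover have "is_assignment (dmodel W) (\<eta> i)"
    using reachable_is_assignment[OF wf is_run_reachable[OF run]] i by simp
  moreover have "valid_neg_guard_dnf W t (\<phi> t)"
    using guard_dnf assms(1,2) by blast
  ultimately have "\<not> gsat (dmodel W) (\<eta> i) (gd W t)"
    unfolding valid_neg_guard_dnf_def by simp
  then show False
    using fire_guard[OF run_fire[OF i]] \<open>t = tr i\<close> by simp
qed

lemma bc_laws_sat: "law \<in> bc_laws W \<phi> \<Longrightarrow> law_sat l S law"
  unfolding bc_laws_def
  by (elim UnE CollectE exE conjE insertE emptyE)
    (simp_all add: inertia_law_sat consume_law_sat produce_law_sat write_law_sat clear_law_sat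
      write_range_law_sat concurrency_law_sat preset_law_sat trans_law_sat initially_law_sat
      guard_law_sat bc_fdom_def is_run_init[OF run] pstart_places[OF wf])

lemma S_satisfies_prog:
  assumes "r \<in> prog l (bc W \<phi>)" "rneg r \<inter> S = {}" "rpos r \<subseteq> S"
  shows "rhead r \<inter> S \<noteq> {}"
proof -
  from assms(1) consider (law) law where "law \<in> bc_laws W \<phi>" "r \<in> law_rules l law"
    | (fluent_choice) f x where "r = \<lparr>rhead = {fat 0 (f, x), nfat 0 (f, x)}, rpos = {}, rneg = {}\<rparr>"
        "f \<in> fluents (bc W \<phi>)" "x \<in> bc_fdom W f"
    | (action_choice) i a where "r = \<lparr>rhead = {Pos (i, Act a), Neg (i, Act a)}, rpos = {}, rneg = {}\<rparr>"
        "a \<in> trans W" "i < l"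
    | (some_value) i f where "r = \<lparr>rhead = {}, rpos = {}, rneg = (\<lambda>x. fat i (f, x)) ` bc_fdom W f\<rparr>"
        "f \<in> fluents (bc W \<phi>)" "i \<le> l"
    | (unique_value) i f x y where "r = \<lparr>rhead = {nfat i (f, x)}, rpos = {fat i (f, y)}, rneg = {}\<rparr>"
        "x \<in> bc_fdom W f" "x \<noteq> y"
    unfolding prog_def by auto
  then show ?thesis
  proof cases
    case law
    then show ?thesis using bc_laws_sat assms(2,3) unfolding law_sat_def by blast
  next
    case fluent_choice
    then show ?thesis
      by (cases "x = val 0 f") (auto simp: fat_def nfat_def Pos_fluent_in_S Neg_fluent_in_S)
  next
    case action_choice
    then show ?thesis by (cases "a = tr i") (auto simp: Pos_action_in_S Neg_action_in_S)
  next
    case some_value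
    then have "fat i (f, val i f) \<in> rneg r \<inter> S"
      using val_in_fdom by (auto simp: fat_def Pos_fluent_in_S)
    then show ?thesis using assms(2) by blast
  next
    case unique_value
    then show ?thesis using assms(3) by (auto simp: fat_def nfat_def Pos_fluent_in_S Neg_fluent_in_S)
  qed
qed

context
  fixes S' :: "(('v, 'p) fluent, 'd fval, 't) gatom lit set"
  assumes S'_subset: "S' \<subseteq> S"
    and S'_closed: "closed_under (reduct (prog l (bc W \<phi>)) S) S'"
begin

lemma dynamic_law_derives:
  assumes "Dynamic (Some fx) aft ifc \<in> bc_laws W \<phi>" "i < l"
    and "\<forall>A\<in>set aft. Pos (i, A) \<in> S'" "\<forall>fx'\<in>set ifc. nfat (Suc i) fx' \<notin> S"
  shows "fat (Suc i) fx \<in> S'"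
proof -
  have "\<lparr>rhead = hd_lits (Suc i) (Some fx), rpos = (\<lambda>A. Pos (i, A)) ` set aft,
      rneg = nfat (Suc i) ` set ifc\<rparr> \<in> prog l (bc W \<phi>)"
    using law_rules_subset_prog[of _ "bc W \<phi>"] Dynamic_rule_in_law_rules[OF assms(2)] assms(1) by fastforce
  then show ?thesis
    by (rule closed_under_reduct_derives[OF S'_closed]) (use assms(3,4) in \<open>auto simp: hd_lits_def\<close>)
qed

lemma initial_law_derives:
  assumes "Initially f x \<in> bc_laws W \<phi>"
  shows "fat 0 (f, x) \<in> S'"
proof -
  have "\<lparr>rhead = {fat 0 (f, x)}, rpos = {}, rneg = {}\<rparr> \<in> prog l (bc W \<phi>)"
    using law_rules_subset_prog[of _ "bc W \<phi>"] assms by (fastforce simp: law_rules_def)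
  then show ?thesis by (rule closed_under_reduct_derives[OF S'_closed]) auto
qed

lemma action_derived: "i < l \<Longrightarrow> Pos (i, Act (tr i)) \<in> S'"
  using action_choice_in_prog[of "tr i" "bc W \<phi>"] run_trans S'_subset Neg_action_in_S
  by (intro closed_under_reduct_choice[OF S'_closed, of _ "Neg (i, Act (tr i))"]) auto

lemma Neg_action_derived: "Neg (i, Act a) \<in> S \<Longrightarrow> Neg (i, Act a) \<in> S'"
  using action_choice_in_prog[of a "bc W \<phi>" i l] S'_subset Pos_action_in_S Neg_action_in_S
  by (intro closed_under_reduct_choice[OF S'_closed, of _ "Pos (i, Act a)"]) (auto simp: insert_commute)

lemma initial_fluent_derived:
  assumes "f \<in> fluents (bc W \<phi>)"
  shows "fat 0 (f, val 0 f) \<in> S'"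
proof -
  have "Initially f (val 0 f) \<in> bc_laws W \<phi>"
    using assms pstart_places[OF wf] by (cases f) (auto simp: bc_laws_def is_run_init[OF run])
  then show ?thesis by (rule initial_law_derives)
qed

lemma place_step_derived:
  assumes "i < l" "p \<in> places W" "fat i (FPlace p, val i (FPlace p)) \<in> S'"
  shows "fat (Suc i) (FPlace p, val (Suc i) (FPlace p)) \<in> S'"
proof -
  note fire = run_fire[OF assms(1)]
  have act: "\<forall>A\<in>set [Act (tr i)]. Pos (i, A) \<in> S'" using action_derived[OF assms(1)] by simp
  consider (consumed) "p \<in> preset W (tr i) - postset W (tr i)"
    | (produced) "p \<in> postset W (tr i) - preset W (tr i)"
    | (unchanged) "p \<notin> preset W (tr i) - postset W (tr i)" "p \<notin> postset W (tr i) - preset W (tr i)"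
    by blast
  then show ?thesis
  proof cases
    case consumed
    then have "Dynamic (Some (FPlace p, BV False)) [Act (tr i)] [] \<in> bc_laws W \<phi>"
      using run_trans[OF assms(1)] by (auto simp: bc_laws_def)
    from dynamic_law_derives[OF this assms(1) act] show ?thesis
      using fire_consumes[OF fire marking_le_1 consumed] assms(1) by simp
  next
    case produced
    then have "Dynamic (Some (FPlace p, BV True)) [Act (tr i)] [] \<in> bc_laws W \<phi>"
      using run_trans[OF assms(1)] by (auto simp: bc_laws_def)
    from dynamic_law_derives[OF this assms(1) act] show ?thesis
      using fire_produces[OF fire produced] by simp
  next
    case unchanged
    let ?x = "val i (FPlace p)"
    have same: "val (Suc i) (FPlace p) = ?x" using fire_marking_frame[OF fire unchanged] by simp
    have law: "Dynamic (Some (FPlace p, ?x)) [FAt (FPlace p) ?x] [(FPlace p, ?x)] \<in> bc_laws W \<phi>"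
      using assms(2) by (auto simp: bc_laws_def)
    have "fat (Suc i) (FPlace p, ?x) \<in> S'"
      by (rule dynamic_law_derives[OF law assms(1)])
        (use assms(3) same nfat_val_notin_S[of "Suc i" "FPlace p"] in \<open>simp_all add: fat_def\<close>)
    then show ?thesis using same by simp
  qed
qed

lemma var_step_derived:
  assumes "i < l" "v \<in> netvars W" "fat i (FVar v, val i (FVar v)) \<in> S'"
  shows "fat (Suc i) (FVar v, val (Suc i) (FVar v)) \<in> S'"
proof -
  note fire = run_fire[OF assms(1)]
  have act: "\<forall>A\<in>set [Act (tr i)]. Pos (i, A) \<in> S'" using action_derived[OF assms(1)] by simp
  show ?thesis
  proof (cases "wr W (tr i) v")
    case None
    let ?x = "val i (FVar v)"
    have same: "val (Suc i) (FVar v) = ?x" using fire_unwritten[OF fire None] by simp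
    have law: "Dynamic (Some (FVar v, ?x)) [FAt (FVar v) ?x] [(FVar v, ?x)] \<in> bc_laws W \<phi>"
      using assms(1,2) val_in_fdom[of i "FVar v"] by (auto simp: bc_laws_def)
    have "fat (Suc i) (FVar v, ?x) \<in> S'"
      by (rule dynamic_law_derives[OF law assms(1)])
        (use assms(3) same nfat_val_notin_S[of "Suc i" "FVar v"] in \<open>simp_all add: fat_def\<close>)
    then show ?thesis using same by simp
  next
    case (Some X)
    show ?thesis
    proof (cases "X = {}")
      case True
      then have "Dynamic (Some (FVar v, Null)) [Act (tr i)] [] \<in> bc_laws W \<phi>"
        using run_trans[OF assms(1)] Some by (auto simp: bc_laws_def)
      from dynamic_law_derives[OF this assms(1) act] show ?thesis
        using fire_cleared[OF fire] Some True by simp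
    next
      case False
      then obtain d where d: "d \<in> X" "\<eta> (Suc i) v = Some d" using fire_written[OF fire Some] by blast
      then have "Dynamic (Some (FVar v, Val d)) [Act (tr i)] [(FVar v, Val d)] \<in> bc_laws W \<phi>"
        using run_trans[OF assms(1)] Some by (auto simp: bc_laws_def)
      from dynamic_law_derives[OF this assms(1) act] have "fat (Suc i) (FVar v, Val d) \<in> S'"
        using nfat_val_notin_S[of "Suc i" "FVar v"] d(2) by simp
      then show ?thesis using d(2) by simp
    qed
  qed
qed

lemma fluent_step_derived:
  assumes "i < l" "f \<in> fluents (bc W \<phi>)" "fat i (f, val i f) \<in> S'"
  shows "fat (Suc i) (f, val (Suc i) f) \<in> S'"
proof (cases f)
  case (FVar v)
  then show ?thesis using var_step_derived assms by simp
next
  case (FPlace p)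
  then show ?thesis using place_step_derived assms by simp
next
  case FTrans
  have "Dynamic (Some (FTrans, BV True)) [Act (tr i)] [] \<in> bc_laws W \<phi>"
    using run_trans[OF assms(1)] by (auto simp: bc_laws_def)
  from dynamic_law_derives[OF this assms(1)] show ?thesis
    using action_derived[OF assms(1)] FTrans by simp
qed

lemma fluent_derived: "i \<le> l \<Longrightarrow> f \<in> fluents (bc W \<phi>) \<Longrightarrow> fat i (f, val i f) \<in> S'"
proof (induction i arbitrary: f)
  case 0
  then show ?case by (simp add: initial_fluent_derived)
next
  case (Suc i)
  then show ?case using fluent_step_derived by simp
qed

lemma Neg_fluent_derived:
  assumes "Neg (i, FAt f x) \<in> S"
  shows "Neg (i, FAt f x) \<in> S'"
proof -
  have i: "i \<le> l" "f \<in> fluents (bc W \<phi>)" "x \<in> bc_fdom W f" "x \<noteq> val i f"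
    using assms by (simp_all add: Neg_fluent_in_S)
  then have "\<lparr>rhead = {nfat i (f, x)}, rpos = {fat i (f, val i f)}, rneg = {}\<rparr> \<in> prog l (bc W \<phi>)"
    using val_in_fdom by (intro unique_value_rule_in_prog) simp_all
  then show ?thesis
    by (rule closed_under_reduct_derives[OF S'_closed]) (use fluent_derived i in \<open>auto simp: nfat_def\<close>)
qed

lemma S_subset_closed: "S \<subseteq> S'"
proof
  fix a
  assume a: "a \<in> S"
  obtain i A where "a = Pos (i, A) \<or> a = Neg (i, A)" by (cases a) auto
  then show "a \<in> S'"
  proof
    assume "a = Pos (i, A)"
    then show ?thesis using a fluent_derived action_derived
      by (cases A) (auto simp: fat_def Pos_fluent_in_S Pos_action_in_S)
  next
    assume "a = Neg (i, A)"
    then show ?thesis using a Neg_fluent_derived Neg_action_derived by (cases A) auto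
  qed
qed

end

lemma answer_set_S: "answer_set (prog l (bc W \<phi>)) S"
  using S_consistent S_satisfies_prog S_subset_closed by (rule answer_setI)

end

theorem mainTheorem4:
  fixes W :: "('v, 'd, 'p, 't) dawnet"
    and \<phi> :: "'t \<Rightarrow> ('v, 'd) dnf_term list list"
    and l :: nat
    and M :: "nat \<Rightarrow> 'p \<Rightarrow> nat"
    and \<eta> :: "nat \<Rightarrow> ('v, 'd) assignment"
    and tr :: "nat \<Rightarrow> 't"
  assumes "wf_dawnet W"
    and "one_safe W"
    and "\<forall>t\<in>trans W. \<not> guard_trivial W t \<longrightarrow> valid_neg_guard_dnf W t (\<phi> t)"
    and "is_run W l M \<eta> tr"
  shows "answer_set (prog l (bc W \<phi>)) (\<Union>i\<in>{0..l}. Phi W l M \<eta> tr i)"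
proof -
  interpret dawnet_run W \<phi> l M \<eta> tr
    using assms by unfold_locales
  show ?thesis
    using answer_set_S unfolding S_def .
qed

end
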